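(* For every $n\in\mathcal{N}_{z_q}$ with $n\neq 2\lambda^2$, \[ \sup_{I\subseteq S^1}\Biggl|\frac{1}{|\Gamma_{z_q,n}|}\sum_{\gamma\in\Gamma_{z_q,n}}\mathbf{1}_{\{\theta(\gamma)\in I\}}-\frac{|I|}{2\pi}\Biggr|=\sup_{I\subseteq S^1}\Biggl|\frac{1}{|\mathcal{L}_n|}\sum_{(x,y)\in\mathcal{L}_n}\mathbf{1}_{\{\arg(x+iy)\in I\}}-\frac{|I|}{2\pi}\Biggr|, \] the suprema being over arcs $I$ of $S^1=\mathbb{R}/2\pi\mathbb{Z}$ of length $|I|$.
   Context: Let $q\in\{3,4,7,8,11,19,43,67,163\}$, $z_q=\mu+i\lambda$ with $\mu=0$ if $q\in\{4,8\}$, $\mu=1/2$ otherwise, $\lambda=\sqrt q/2$. $\mathbb{H}$ is the upper half-plane with hyperbolic distance $\rho$, $\cosh\rho(z,w)=1+\frac{|z-w|^2}{2\,\mathrm{Im}(z)\mathrm{Im}(w)}$; $\Gamma=\mathrm{PSL}(2,\mathbb{Z})$; $\mathcal{R}(\gamma;z_q)=2\lambda^2\cosh\rho(z_q,\gamma z_q)$, $\mathcal{N}_{z_q}=\{\mathcal{R}(\gamma;z_q):\gamma\in\Gamma\}$, $\Gamma_{z_q,n}=\{\gamma:\mathcal{R}(\gamma;z_q)=n\}$. For $\gamma z_q\ne z_q$, $\theta(\gamma)$ is the angle that the tangent vector at $z_q$ of the geodesic segment from $z_q$ to $\gamma z_q$ makes with the positive horizontal direction. $\mathcal{L}_n=\{(x,y)\in\mathbb{R}^2: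 x^2+y^2=n^2-4\lambda^4,\ (y-n)/(2\lambda^2)\in\mathbb{Z},\ x/\lambda\in\mathbb{Z}\}$. *)

theory Defs
  imports "HOL-Analysis.Analysis"
begin

definition qs :: "nat set" where "qs = {3,4,7,8,11,19,43,67,163}"
definition mu :: "nat \<Rightarrow> real" where "mu q = (if q \<in> {4,8} then 0 else 1/2)"
definition lam :: "nat \<Rightarrow> real" where "lam q = sqrt (real q) / 2"
definition zq :: "nat \<Rightarrow> complex" where "zq q = Complex (mu q) (lam q)"

definition cosh_rho :: "complex \<Rightarrow> complex \<Rightarrow> real" where
  "cosh_rho z w = 1 + (cmod (z - w))^2 / (2 * Im z * Im w)"

definition SL2Z :: "(int \<times> int \<times> int \<times> int) set" where
  "SL2Z = {(a,b,c,d). a*d - b*c = 1}"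
definition mneg :: "int \<times> int \<times> int \<times> int \<Rightarrow> int \<times> int \<times> int \<times> int" where
  "mneg M = (case M of (a,b,c,d) \<Rightarrow> (-a,-b,-c,-d))"
definition PSL2Z :: "(int \<times> int \<times> int \<times> int) set set" where
  "PSL2Z = {{M, mneg M} | M. M \<in> SL2Z}"

definition moeb :: "int \<times> int \<times> int \<times> int \<Rightarrow> complex \<Rightarrow> complex" where
  "moeb M z = (case M of (a,b,c,d) \<Rightarrow> (of_int a * z + of_int b) / (of_int c * z + of_int d))"
text \<open>Action of a PSL(2,Z) element (well defined: M and -M act identically).\<close>
definition act :: "(int \<times> int \<times> int \<times> int) set \<Rightarrow> complex \<Rightarrow> complex" where
  "act g z = moeb (SOME M. M \<in> g) z"

definition Rval :: "nat \<Rightarrow> (int \<times> int \<times> int \<times> int) set \<Rightarrow> real" where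
  "Rval q g = 2 * (lam q)^2 * cosh_rho (zq q) (act g (zq q))"
definition Nset :: "nat \<Rightarrow> real set" where
  "Nset q = Rval q ` PSL2Z"
definition Gamma_n :: "nat \<Rightarrow> real \<Rightarrow> (int \<times> int \<times> int \<times> int) set set" where
  "Gamma_n q n = {g \<in> PSL2Z. Rval q g = n}"

text \<open>Tangent vector at z (in the upper half-plane) of the hyperbolic geodesic segment
  from z to w \<noteq> z: the geodesic is the vertical line if Re w = Re z, and otherwise the
  semicircle centred at the real point c equidistant from z and w.\<close>
definition geo_tangent :: "complex \<Rightarrow> complex \<Rightarrow> complex" where
  "geo_tangent z w =
     (if Re w = Re z then (if Im w > Im z then \<i> else - \<i>)
      else (let c = ((cmod w)^2 - (cmod z)^2) / (2 * (Re w - Re z)) in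
            if Re w > Re z then \<i> * (of_real c - z) else - \<i> * (of_real c - z)))"

definition theta :: "nat \<Rightarrow> (int \<times> int \<times> int \<times> int) set \<Rightarrow> real" where
  "theta q g = Arg (geo_tangent (zq q) (act g (zq q)))"

definition Lset :: "nat \<Rightarrow> real \<Rightarrow> (real \<times> real) set" where
  "Lset q n = {(x,y). x^2 + y^2 = n^2 - 4 * (lam q)^4 \<and>
                      (y - n) / (2 * (lam q)^2) \<in> \<int> \<and> x / lam q \<in> \<int>}"

text \<open>Arcs of S^1 = R/2piZ: the arc starting at angle a of length l (0 \<le> l \<le> 2pi),
  taken half-open [a, a+l) modulo 2pi.\<close>
definition arcs :: "(real \<times> real) set" where
  "arcs = {(a,l). 0 \<le> l \<and> l \<le> 2 * pi}"
definition in_arc :: "real \<Rightarrow> real \<Rightarrow> real \<Rightarrow> bool" where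
  "in_arc a l t \<longleftrightarrow> (\<exists>k::int. a \<le> t + 2 * pi * of_int k \<and> t + 2 * pi * of_int k < a + l)"

end

theory Submission
  imports Defs
begin

text \<open>
  Write \<open>z\<^sub>q = (t + i \<surd>q)/2\<close> and \<open>N = |z\<^sub>q|\<^sup>2\<close>, so that \<open>x\<^sup>2 + t x y + N y\<^sup>2\<close> is the principal form of
  discriminant \<open>-q\<close>. To \<open>\<gamma> = (a,b,c,d)\<close> attach the integral form
  \<open>(A, B, C) = (|a z\<^sub>q + b|\<^sup>2, 2 Re ((a z\<^sub>q + b) (c z\<^sub>q + d)\<^sup>*), |c z\<^sub>q + d|\<^sup>2)\<close> of discriminant \<open>-q\<close>.
  Then \<open>\<gamma> z\<^sub>q = B/(2C) + i \<lambda>/C\<close>, hence \<open>R(\<gamma>) = A - t B/2 + N C\<close>, and the tangent angle \<open>\<theta>(\<gamma>)\<close> is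
  the argument of \<open>(\<lambda> (B - t C), R(\<gamma>) - 2 \<lambda>\<^sup>2 C)\<close>, a point of \<open>L\<^sub>n\<close>. This correspondence is a
  bijection between positive definite forms of value \<open>n\<close> and \<open>L\<^sub>n\<close>, and since \<open>-q\<close> has class
  number one every such form comes from exactly as many matrices as fix \<open>z\<^sub>q\<close>. So the
  angles \<open>\<theta>(\<gamma>)\<close>, \<open>\<gamma> \<in> \<Gamma>\<^sub>n\<close>, are the arguments of the points of \<open>L\<^sub>n\<close>, each with the same
  multiplicity, and the two discrepancies coincide.
\<close>

lemma sum_const_fibres:
  assumes "finite S" and "f ` S = T" and "\<And>t. t \<in> T \<Longrightarrow> card {s \<in> S. f s = t} = k"
  shows "(\<Sum>s\<in>S. h (f s)) = of_nat k * (\<Sum>t\<in>T. h t)"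
proof -
  have "(\<Sum>s\<in>S. h (f s)) = (\<Sum>t\<in>T. \<Sum>s\<in>{s \<in> S. f s = t}. h (f s))"
    using sum.image_gen[OF assms(1)] assms(2) by blast
  also have "\<dots> = (\<Sum>t\<in>T. of_nat k * h t)" using assms(3) by (intro sum.cong) simp_all
  finally show ?thesis by (simp add: sum_distrib_left)
qed

lemma average_const_fibres:
  fixes h :: "'b \<Rightarrow> real"
  assumes "finite S" and "f ` S = T" and "\<And>t. t \<in> T \<Longrightarrow> card {s \<in> S. f s = t} = k"
  shows "(\<Sum>s\<in>S. h (f s)) / card S = (\<Sum>t\<in>T. h t) / card T"
proof (cases "S = {}")
  case False
  then obtain s where "s \<in> S" by blast
  then have "k = card {s' \<in> S. f s' = f s}" using assms(2,3) by auto
  also have "\<dots> > 0" using \<open>s \<in> S\<close> assms(1) by (auto simp: card_gt_0_iff)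
  finally have "k > 0" .
  moreover have "real (card S) = of_nat k * card T"
    using sum_const_fibres[OF assms, of "\<lambda>_. 1 :: real"] by simp
  ultimately show ?thesis using sum_const_fibres[OF assms, of h] by simp
qed (use assms(2) in simp)

section \<open>Tangents of hyperbolic geodesics\<close>

lemma Arg_geo_tangent:
  assumes "0 < Im z" "0 < Im w" "w \<noteq> z"
  shows "Arg (geo_tangent z w)
       = Arg (Complex (2 * Im z * (Re w - Re z)) ((Re w - Re z)^2 + (Im w)^2 - (Im z)^2))"
    (is "_ = Arg ?v")
proof (cases "Re w = Re z")
  case True
  have "Im w \<noteq> Im z" using True assms(3) complex_eqI by blast
  then consider "Im z < Im w" | "Im w < Im z" by linarith
  then show ?thesis
  proof cases
    case 1
    have v: "?v = of_real ((Im w + Im z) * (Im w - Im z)) * \<i>"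
      using True by (simp add: complex_eq_iff power2_eq_square algebra_simps)
    have pos: "0 < (Im w + Im z) * (Im w - Im z)" using 1 assms(1,2) by simp
    show ?thesis using True 1 unfolding v Arg_times_of_real[OF pos] by (simp add: geo_tangent_def)
  next
    case 2
    have v: "?v = of_real ((Im w + Im z) * (Im z - Im w)) * (- \<i>)"
      using True by (simp add: complex_eq_iff power2_eq_square algebra_simps)
    have pos: "0 < (Im w + Im z) * (Im z - Im w)" using 2 assms(1,2) by simp
    show ?thesis using True 2 unfolding v Arg_times_of_real[OF pos] by (simp add: geo_tangent_def)
  qed
next
  case False
  define c where "c = ((cmod w)^2 - (cmod z)^2) / (2 * (Re w - Re z))"
  \<comment> \<open>the geodesic is the circle about the real point \<open>c\<close>, so its tangent at \<open>z\<close> is \<open>\<plusminus>\<i> (c - z)\<close>\<close>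
  have v: "?v = of_real (2 * (Re w - Re z)) * (\<i> * (of_real c - z))"
    using False unfolding c_def cmod_power2 by (simp add: complex_eq_iff field_simps power2_eq_square)
  consider "Re z < Re w" | "Re w < Re z" using False by linarith
  then show ?thesis
  proof cases
    case 1
    then have pos: "0 < 2 * (Re w - Re z)" by simp
    show ?thesis using 1 unfolding v Arg_times_of_real[OF pos] by (simp add: geo_tangent_def c_def)
  next
    case 2
    then have pos: "0 < 2 * (Re z - Re w)" by simp
    have v': "?v = of_real (2 * (Re z - Re w)) * (- \<i> * (of_real c - z))"
      using v by (simp add: complex_eq_iff algebra_simps)
    show ?thesis using 2 unfolding v' Arg_times_of_real[OF pos] by (simp add: geo_tangent_def c_def)
  qed
qed

text \<open>\<open>z\<^sub>q = (t + i \<surd>q)/2\<close> with \<open>t = tq q\<close>, and \<open>Nq q = |z\<^sub>q|\<^sup>2\<close>.\<close>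

definition tq :: "nat \<Rightarrow> int" where "tq q = (if q \<in> {4,8} then 0 else 1)"
definition Nq :: "nat \<Rightarrow> int" where "Nq q = (int q + tq q) div 4"

lemma tq_cases: "tq q = 0 \<or> tq q = 1"
  by (simp add: tq_def)

lemma qs_ge_3: "q \<in> qs \<Longrightarrow> 3 \<le> q"
  by (auto simp: qs_def)

lemma four_Nq: "q \<in> qs \<Longrightarrow> 4 * Nq q = int q + tq q"
  by (auto simp: qs_def tq_def Nq_def)

lemma tq_parity: "q \<in> qs \<Longrightarrow> tq q = int q mod 2"
  by (auto simp: qs_def tq_def)

lemma Nq_pos: "q \<in> qs \<Longrightarrow> 1 \<le> Nq q"
  by (auto simp: qs_def tq_def Nq_def)

lemma lam_pos: "q \<in> qs \<Longrightarrow> 0 < lam q"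
  by (auto simp: qs_def lam_def)

lemma lam_sq: "(lam q)^2 = real q / 4"
  by (simp add: lam_def power_divide)

lemma zq_eq: "zq q = Complex (of_int (tq q) / 2) (lam q)"
  by (simp add: zq_def mu_def tq_def)

lemma zq_norm_sq: "q \<in> qs \<Longrightarrow> (of_int (tq q) / 2)^2 + (lam q)^2 = real_of_int (Nq q)"
  using arg_cong[OF four_Nq, of q real_of_int] tq_cases[of q] by (auto simp: lam_sq field_simps)

definition mat_mul :: "int\<times>int\<times>int\<times>int \<Rightarrow> int\<times>int\<times>int\<times>int \<Rightarrow> int\<times>int\<times>int\<times>int" where
  "mat_mul M N = (case M of (a,b,c,d) \<Rightarrow> case N of (e,f,g,h) \<Rightarrow>
     (a*e + b*g, a*f + b*h, c*e + d*g, c*f + d*h))"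

definition mat_adj :: "int\<times>int\<times>int\<times>int \<Rightarrow> int\<times>int\<times>int\<times>int" where
  "mat_adj M = (case M of (a,b,c,d) \<Rightarrow> (d, -b, -c, a))"

definition mat_transpose :: "int\<times>int\<times>int\<times>int \<Rightarrow> int\<times>int\<times>int\<times>int" where
  "mat_transpose M = (case M of (a,b,c,d) \<Rightarrow> (a, c, b, d))"

lemma mat_mul_simp [simp]:
  "mat_mul (a,b,c,d) (e,f,g,h) = (a*e + b*g, a*f + b*h, c*e + d*g, c*f + d*h)"
  by (simp add: mat_mul_def)

lemma mat_adj_simp [simp]: "mat_adj (a,b,c,d) = (d, -b, -c, a)"
  by (simp add: mat_adj_def)

lemma mat_transpose_simp [simp]: "mat_transpose (a,b,c,d) = (a, c, b, d)"
  by (simp add: mat_transpose_def)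

lemma mat_transpose_transpose [simp]: "mat_transpose (mat_transpose M) = M"
  by (cases M) simp

lemma mat_mul_assoc: "mat_mul (mat_mul M N) P = mat_mul M (mat_mul N P)"
  by (cases M; cases N; cases P) (simp add: algebra_simps)

lemma mat_mul_1_left [simp]: "mat_mul (1,0,0,1) M = M"
  by (cases M) simp

lemma mat_mul_1_right [simp]: "mat_mul M (1,0,0,1) = M"
  by (cases M) simp

lemma mat_transpose_mul: "mat_transpose (mat_mul M N) = mat_mul (mat_transpose N) (mat_transpose M)"
  by (cases M; cases N) (simp add: algebra_simps)

lemma mat_mul_adj:
  assumes "M \<in> SL2Z"
  shows "mat_mul M (mat_adj M) = (1,0,0,1)" "mat_mul (mat_adj M) M = (1,0,0,1)"
  using assms by (cases M; auto simp: SL2Z_def algebra_simps)+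

lemma SL2Z_mat_mul:
  assumes "M \<in> SL2Z" and "N \<in> SL2Z"
  shows "mat_mul M N \<in> SL2Z"
proof -
  obtain a b c d e f g h where MN: "M = (a,b,c,d)" "N = (e,f,g,h)"
    by (cases M; cases N)
  have "(a*e + b*g) * (c*f + d*h) - (a*f + b*h) * (c*e + d*g) = (a*d - b*c) * (e*h - f*g)"
    by algebra
  then show ?thesis using assms by (simp add: MN SL2Z_def)
qed

lemma SL2Z_mat_adj: "M \<in> SL2Z \<Longrightarrow> mat_adj M \<in> SL2Z"
  and SL2Z_mat_transpose: "M \<in> SL2Z \<Longrightarrow> mat_transpose M \<in> SL2Z"
  by (cases M; auto simp: SL2Z_def algebra_simps)+

lemma mneg_mneg [simp]: "mneg (mneg M) = M"
  and SL2Z_mneg: "M \<in> SL2Z \<Longrightarrow> mneg M \<in> SL2Z"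
  and mneg_neq: "M \<in> SL2Z \<Longrightarrow> mneg M \<noteq> M"
  by (cases M; auto simp: mneg_def SL2Z_def)+

text \<open>\<open>(A,B,C)\<close> stands for \<open>A x\<^sup>2 + B x y + C y\<^sup>2\<close>, and \<open>form_act F (a,b,c,d)\<close> is \<open>F (a x + b y, c x + d y)\<close>.\<close>
definition form_act :: "int\<times>int\<times>int \<Rightarrow> int\<times>int\<times>int\<times>int \<Rightarrow> int\<times>int\<times>int" where
  "form_act F M = (case F of (A,B,C) \<Rightarrow> case M of (a,b,c,d) \<Rightarrow>
     (A*a^2 + B*a*c + C*c^2, 2*A*a*b + B*(a*d + b*c) + 2*C*c*d, A*b^2 + B*b*d + C*d^2))"

definition disc :: "int\<times>int\<times>int \<Rightarrow> int" where
  "disc F = (case F of (A,B,C) \<Rightarrow> B^2 - 4*A*C)"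

lemma form_act_simp [simp]: "form_act (A,B,C) (a,b,c,d) =
     (A*a^2 + B*a*c + C*c^2, 2*A*a*b + B*(a*d + b*c) + 2*C*c*d, A*b^2 + B*b*d + C*d^2)"
  by (simp add: form_act_def)

lemma disc_simp [simp]: "disc (A,B,C) = B^2 - 4*A*C"
  by (simp add: disc_def)

lemma form_act_id [simp]: "form_act F (1,0,0,1) = F"
  by (cases F) simp

lemma form_act_mul: "form_act (form_act F M) N = form_act F (mat_mul M N)"
  by (cases F; cases M; cases N) (simp add: power2_eq_square algebra_simps)

lemma disc_form_act:
  assumes "M \<in> SL2Z"
  shows "disc (form_act F M) = disc F"
proof -
  obtain A B C a b c d where FM: "F = (A,B,C)" "M = (a,b,c,d)"
    by (cases F; cases M)
  have "(2*A*a*b + B*(a*d + b*c) + 2*C*c*d)^2 - 4*(A*a^2 + B*a*c + C*c^2)*(A*b^2 + B*b*d + C*d^2)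
      = (a*d - b*c)^2 * (B^2 - 4*A*C)"
    by algebra
  then show ?thesis using assms by (simp add: FM SL2Z_def)
qed

lemma four_principal_form:
  "q \<in> qs \<Longrightarrow> 4 * (Nq q * x^2 + tq q * x * y + y^2) = (2*y + tq q * x)^2 + int q * x^2"
  using four_Nq[of q] tq_cases[of q] by (auto simp: power2_eq_square algebra_simps)

lemma principal_form_pos:
  assumes "q \<in> qs" and "(x, y) \<noteq> (0, 0)"
  shows "0 < Nq q * x^2 + tq q * x * y + y^2"
proof -
  have "0 < (2*y + tq q * x)^2 + int q * x^2"
    using assms qs_ge_3[OF assms(1)] by (cases "x = 0") (auto intro: add_nonneg_pos)
  then have "0 < 4 * (Nq q * x^2 + tq q * x * y + y^2)"
    by (simp only: four_principal_form[OF assms(1)])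
  then show ?thesis by simp
qed

lemma abs_le_square_int: "\<bar>x\<bar> \<le> (x::int)^2"
proof (cases "x = 0")
  case False
  then have "\<bar>x\<bar> \<le> \<bar>x\<bar>^2" by (intro self_le_power) auto
  then show ?thesis by simp
qed simp

lemma principal_form_bound:
  assumes q: "q \<in> qs" and m: "Nq q * x^2 + tq q * x * y + y^2 \<le> m"
  shows "\<bar>x\<bar> \<le> 4*m" "\<bar>y\<bar> \<le> 4*m"
proof -
  have sum: "(2*y + tq q * x)^2 + int q * x^2 \<le> 4*m"
    unfolding four_principal_form[OF q, symmetric] using m by simp
  have "x^2 \<le> int q * x^2" using qs_ge_3[OF q] by (simp add: mult_right_mono[of 1 "int q" "x^2", simplified])
  then have "x^2 \<le> 4*m" using sum zero_le_power2[of "2*y + tq q * x"] by linarith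
  then show x: "\<bar>x\<bar> \<le> 4*m" using abs_le_square_int[of x] by linarith
  have "0 \<le> int q * x^2" by simp
  then have "(2*y + tq q * x)^2 \<le> 4*m" using sum by linarith
  then have "\<bar>2*y + tq q * x\<bar> \<le> 4*m" using abs_le_square_int[of "2*y + tq q * x"] by linarith
  moreover have "\<bar>tq q * x\<bar> \<le> \<bar>x\<bar>" using tq_cases[of q] by auto
  ultimately show "\<bar>y\<bar> \<le> 4*m" using x by linarith
qed

section \<open>Class number one\<close>

lemma reduced_form_is_principal:
  assumes q: "q \<in> qs" and red: "-A < B" "B \<le> A" "A \<le> C" and d: "4*A*C - B^2 = int q"
  shows "(A, B, C) = (1, tq q, Nq q)"
proof -
  have "A > 0" using red by linarith
  have "B^2 \<le> A^2" using red by (simp add: abs_le_square_iff[symmetric] abs_le_iff)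
  moreover have "A*A \<le> A*C" using \<open>A > 0\<close> red by simp
  ultimately have small: "3*A*A \<le> int q" using d by (simp add: power2_eq_square)
  have "A \<le> 7"
  proof (rule ccontr)
    assume "\<not> A \<le> 7"
    then have "8*8 \<le> A*A" by (intro mult_mono) auto
    moreover have "int q \<le> 163" using q by (auto simp: qs_def)
    ultimately show False using small by linarith
  qed
  \<comment> \<open>class number one: no reduced form of discriminant \<open>-q\<close> has leading coefficient \<open>\<ge> 2\<close>\<close>
  have "\<forall>q\<in>{3,4,7,8,11,19,43,67,163}. \<forall>A\<in>set [2..7]. \<forall>B\<in>set [-6..7].
          3*A*A \<le> q \<longrightarrow> -A < B \<longrightarrow> B \<le> A \<longrightarrow> \<not> 4*A dvd B^2 + q"
    by (simp add: upto.simps)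
  moreover have "int q \<in> {3,4,7,8,11,19,43,67,163}" using q by (auto simp: qs_def)
  moreover have "4*A dvd B^2 + int q" using d by (metis add_diff_cancel_left' diff_add_cancel dvd_triv_left)
  moreover have "A \<in> set [2..7]" if "A \<noteq> 1" unfolding set_upto using that \<open>A > 0\<close> \<open>A \<le> 7\<close> by simp
  moreover have "B \<in> set [-6..7]" unfolding set_upto using red \<open>A \<le> 7\<close> by simp
  ultimately have "A = 1" using small red by blast
  then have "B = 0 \<or> B = 1" using red by auto
  then show ?thesis using d \<open>A = 1\<close> four_Nq[OF q] tq_parity[OF q]
    by (elim disjE) (simp; presburger)+
qed

lemma form_reduction:
  assumes q: "q \<in> qs"
  shows "4*A*C - B^2 = int q \<Longrightarrow> 0 < A \<Longrightarrow> \<exists>U\<in>SL2Z. form_act (A,B,C) U = (1, tq q, Nq q)"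
proof (induction "nat A" arbitrary: A B C rule: less_induct)
  case less
  \<comment> \<open>translate \<open>B\<close> into \<open>]-A, A]\<close>, then either the form is reduced or swap \<open>A\<close> and \<open>C\<close>\<close>
  define k where "k = (A - B) div (2*A)"
  define B' where "B' = B + 2*A*k"
  define C' where "C' = A*k^2 + B*k + C"
  have T: "form_act (A,B,C) (1,k,0,1) = (A,B',C')"
    by (simp add: B'_def C'_def power2_eq_square algebra_simps)
  have T_SL: "(1,k,0,1) \<in> SL2Z" by (simp add: SL2Z_def)
  have "A - B = 2*A*k + (A - B) mod (2*A)" by (simp add: k_def)
  moreover have "0 \<le> (A - B) mod (2*A)" "(A - B) mod (2*A) < 2*A" using less.prems by simp_all
  ultimately have B'_bounds: "-A < B'" "B' \<le> A" by (simp_all add: B'_def)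
  have "disc (A,B',C') = disc (A,B,C)"
    using disc_form_act[OF T_SL, of "(A,B,C)"] by (simp only: T)
  then have d': "4*A*C' - B'^2 = int q" using less.prems(1) by simp
  show ?case
  proof (cases "C' < A")
    case True
    have "0 < 4*A*C'" using d' qs_ge_3[OF q] zero_le_power2[of B'] by linarith
    then have "0 < C'" using less.prems(2) by (simp add: zero_less_mult_iff)
    moreover have "4*C'*A - (-B')^2 = int q" using d' by (simp add: algebra_simps)
    ultimately obtain U where U: "U \<in> SL2Z" "form_act (C',-B',A) U = (1, tq q, Nq q)"
      using less.hyps[where A = C' and B = "-B'" and C = A] True by auto
    have "form_act (A,B',C') (0,-1,1,0) = (C',-B',A)" by simp
    then have "form_act (A,B,C) (mat_mul (1,k,0,1) (mat_mul (0,-1,1,0) U)) = (1, tq q, Nq q)"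
      by (simp only: form_act_mul[symmetric] T U(2))
    moreover have "mat_mul (1,k,0,1) (mat_mul (0,-1,1,0) U) \<in> SL2Z"
      by (intro SL2Z_mat_mul T_SL U(1)) (simp add: SL2Z_def)
    ultimately show ?thesis by blast
  next
    case False
    then have "(A,B',C') = (1, tq q, Nq q)"
      using reduced_form_is_principal[OF q B'_bounds _ d'] by simp
    then show ?thesis using T T_SL by metis
  qed
qed

text \<open>\<open>zq_form q (a,b,c,d) = (|a z\<^sub>q + b|\<^sup>2, 2 Re ((a z\<^sub>q + b) (c z\<^sub>q + d)\<^sup>*), |c z\<^sub>q + d|\<^sup>2)\<close>.\<close>

definition zq_form :: "nat \<Rightarrow> int\<times>int\<times>int\<times>int \<Rightarrow> int\<times>int\<times>int" where
  "zq_form q M = form_act (Nq q, tq q, 1) (mat_transpose M)"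

lemma zq_form_simp: "zq_form q (a,b,c,d) =
    (Nq q*a^2 + tq q*a*b + b^2, 2*Nq q*a*c + tq q*(a*d + b*c) + 2*b*d, Nq q*c^2 + tq q*c*d + d^2)"
  by (simp add: zq_form_def algebra_simps)

lemma zq_form_mat_mul: "zq_form q (mat_mul M N) = form_act (zq_form q N) (mat_transpose M)"
  by (simp add: zq_form_def mat_transpose_mul form_act_mul)

lemma disc_zq_form:
  assumes "q \<in> qs" "M \<in> SL2Z"
  shows "disc (zq_form q M) = - int q"
  using disc_form_act[OF SL2Z_mat_transpose[OF assms(2)], of "(Nq q, tq q, 1)"] four_Nq[OF assms(1)] tq_cases[of q]
  by (auto simp: zq_form_def power2_eq_square)

lemma disc_zq_form_real:
  assumes "q \<in> qs" "M \<in> SL2Z" "zq_form q M = (A,B,C)"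
  shows "4 * real_of_int A * C - real_of_int B ^ 2 = 4 * (lam q)^2"
proof -
  have "4*A*C - B^2 = int q" using disc_zq_form[OF assms(1,2)] assms(3) by simp
  then have "real_of_int (4*A*C - B^2) = real q" by simp
  then show ?thesis by (simp add: lam_sq)
qed

lemma zq_form_pos:
  assumes "q \<in> qs" "M \<in> SL2Z" "zq_form q M = (A,B,C)"
  shows "0 < A" "0 < C"
proof -
  obtain a b c d where M: "M = (a,b,c,d)" by (cases M)
  have "(a,b) \<noteq> (0,0)" "(c,d) \<noteq> (0,0)" using assms(2) by (auto simp: M SL2Z_def)
  then show "0 < A" "0 < C"
    using principal_form_pos[OF assms(1)] assms(3) by (auto simp: M zq_form_simp)
qed

lemma zq_form_surj:
  assumes q: "q \<in> qs" and d: "4*A*C - B^2 = int q" and A: "0 < A"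
  shows "\<exists>M\<in>SL2Z. zq_form q M = (A,B,C)"
proof -
  obtain U where U: "U \<in> SL2Z" "form_act (A,B,C) U = (1, tq q, Nq q)"
    using form_reduction[OF q d A] by blast
  have "form_act (1, tq q, Nq q) (tq q, 1, -1, 0) = (Nq q, tq q, 1)"
    using tq_cases[of q] by (auto simp: power2_eq_square)
  then have "form_act (A,B,C) (mat_mul U (tq q, 1, -1, 0)) = (Nq q, tq q, 1)"
    by (simp only: form_act_mul[symmetric] U(2))
  moreover define V where "V = mat_mul U (tq q, 1, -1, 0)"
  ultimately have V: "form_act (A,B,C) V = (Nq q, tq q, 1)" by simp
  have V_SL: "V \<in> SL2Z" unfolding V_def by (intro SL2Z_mat_mul U(1)) (simp add: SL2Z_def)
  have "zq_form q (mat_transpose (mat_adj V)) = form_act (form_act (A,B,C) V) (mat_adj V)"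
    by (simp only: zq_form_def V mat_transpose_transpose)
  also have "\<dots> = (A,B,C)"
    by (simp only: form_act_mul mat_mul_adj(1)[OF V_SL] form_act_id)
  finally show ?thesis using V_SL SL2Z_mat_transpose SL2Z_mat_adj by blast
qed

lemma moeb_zq:
  assumes q: "q \<in> qs" and M: "M \<in> SL2Z" and F: "zq_form q M = (A,B,C)"
  shows "moeb M (zq q) = Complex (B / (2*C)) (lam q / C)"
proof -
  obtain a b c d where M_eq: "M = (a,b,c,d)" by (cases M)
  define t N l where "t = real_of_int (tq q)" and "N = real_of_int (Nq q)" and "l = lam q"
  have N: "(t/2)^2 + l^2 = N" using zq_norm_sq[OF q] by (simp add: t_def l_def N_def)
  have z: "zq q = Complex (t/2) l" by (simp add: zq_eq t_def l_def)
  have "B = 2*Nq q*a*c + tq q*(a*d + b*c) + 2*b*d" "C = Nq q*c^2 + tq q*c*d + d^2"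
    using F by (simp_all add: M_eq zq_form_simp)
  then have B: "real_of_int B = 2*N*a*c + t*(a*d + b*c) + 2*b*d"
    and C: "real_of_int C = N*c^2 + t*c*d + d^2"
    by (simp_all add: t_def N_def)
  have "(cmod (of_int c * zq q + of_int d))^2 = c^2 * ((t/2)^2 + l^2) + t*c*d + d^2"
    unfolding cmod_power2 by (simp add: z power2_eq_square algebra_simps)
  then have den: "(cmod (of_int c * zq q + of_int d))^2 = C" by (simp add: N C)
  have "(of_int a * zq q + of_int b) * cnj (of_int c * zq q + of_int d)
      = Complex (of_int (a*c) * ((t/2)^2 + l^2) + t/2 * of_int (a*d + b*c) + of_int (b*d))
                (of_int (a*d - b*c) * l)"
    by (simp add: z complex_eq_iff power2_eq_square algebra_simps)
  also have "\<dots> = Complex (B/2) l"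
    using M unfolding N by (simp add: B M_eq SL2Z_def algebra_simps)
  finally have num: "(of_int a * zq q + of_int b) * cnj (of_int c * zq q + of_int d) = Complex (B/2) l" .
  have "moeb M (zq q) = Complex (B/2) l / of_real C"
    unfolding moeb_def M_eq prod.case complex_div_cnj[of "_ + _"] num den ..
  then show ?thesis by (simp add: complex_eq_iff l_def)
qed

lemma moeb_mneg: "moeb (mneg M) z = moeb M z"
proof -
  obtain a b c d where "M = (a,b,c,d)" by (cases M)
  then show ?thesis
    unfolding moeb_def mneg_def
    by (simp only: prod.case of_int_minus mult_minus_left minus_add_distrib[symmetric] minus_divide_divide)
qed

lemma act_pair: "act {M, mneg M} z = moeb M z"
proof -
  have "(SOME M'. M' \<in> {M, mneg M}) \<in> {M, mneg M}" by (rule someI[of _ M]) simp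
  then show ?thesis unfolding act_def using moeb_mneg[of M z] by auto
qed

definition form_Rval :: "nat \<Rightarrow> int\<times>int\<times>int \<Rightarrow> real" where
  "form_Rval q F = (case F of (A,B,C) \<Rightarrow> A - of_int (tq q) * B / 2 + of_int (Nq q) * C)"

lemma Rval_zq_form:
  assumes q: "q \<in> qs" and M: "M \<in> SL2Z"
  shows "Rval q {M, mneg M} = form_Rval q (zq_form q M)"
proof -
  obtain A B C where F: "zq_form q M = (A,B,C)" by (cases "zq_form q M")
  define t N l where "t = real_of_int (tq q)" and "N = real_of_int (Nq q)" and "l = lam q"
  have N: "(t/2)^2 + l^2 = N" using zq_norm_sq[OF q] by (simp add: t_def l_def N_def)
  have d: "4 * real_of_int A * C - real_of_int B ^ 2 = 4 * l^2"
    using disc_zq_form_real[OF q M F] by (simp add: l_def)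
  have l: "l > 0" using lam_pos[OF q] by (simp add: l_def)
  have C: "real_of_int C > 0" using zq_form_pos[OF q M F] by simp
  have w: "act {M, mneg M} (zq q) = Complex (B/(2*C)) (l/C)"
    by (simp add: act_pair moeb_zq[OF q M F] l_def)
  have "Rval q {M, mneg M} = 2*l^2 * (1 + ((t/2 - B/(2*C))^2 + (l - l/C)^2) / (2*l*(l/C)))"
    unfolding Rval_def cosh_rho_def w by (simp add: zq_eq cmod_power2 t_def l_def)
  also have "\<dots> = C * ((t/2)^2 + l^2) - t*B/2 + (B^2 + 4*l^2) / (4*C)"
    using l C by (simp add: field_simps power2_eq_square)
  also have "\<dots> = A - t*B/2 + N*C"
    unfolding N using C d[symmetric] by (simp add: field_simps)
  finally show ?thesis by (simp add: F form_Rval_def t_def N_def)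
qed

definition lattice_point :: "nat \<Rightarrow> real \<Rightarrow> int\<times>int\<times>int \<Rightarrow> real \<times> real" where
  "lattice_point q n F = (case F of (A,B,C) \<Rightarrow> (lam q * (B - of_int (tq q) * C), n - 2 * (lam q)^2 * C))"

lemma theta_zq_form:
  assumes q: "q \<in> qs" and M: "M \<in> SL2Z"
    and n: "Rval q {M, mneg M} = n" "n \<noteq> 2 * (lam q)^2"
    and p: "lattice_point q n (zq_form q M) = (x, y)"
  shows "theta q {M, mneg M} = Arg (Complex x y)"
proof -
  obtain A B C where F: "zq_form q M = (A,B,C)" by (cases "zq_form q M")
  define t N l where "t = real_of_int (tq q)" and "N = real_of_int (Nq q)" and "l = lam q"
  have N: "(t/2)^2 + l^2 = N" using zq_norm_sq[OF q] by (simp add: t_def l_def N_def)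
  have d: "4 * real_of_int A * C - real_of_int B ^ 2 = 4 * l^2"
    using disc_zq_form_real[OF q M F] by (simp add: l_def)
  have l: "l > 0" using lam_pos[OF q] by (simp add: l_def)
  have C: "real_of_int C > 0" using zq_form_pos[OF q M F] by simp
  have A: "real_of_int A = (B^2 + 4*l^2) / (4*C)" using d C by (simp add: field_simps)
  have n_eq: "n = A - t*B/2 + N*C"
    using Rval_zq_form[OF q M] n(1) by (simp add: F form_Rval_def t_def N_def)
  have xy: "x = l * (B - t*C)" "y = n - 2*l^2*C"
    using p by (simp_all add: F lattice_point_def t_def l_def)
  define z w where "z = zq q" and "w = act {M, mneg M} (zq q)"
  have z: "z = Complex (t/2) l" by (simp add: z_def zq_eq t_def l_def)
  have w: "w = Complex (B/(2*C)) (l/C)"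
    by (simp add: w_def act_pair moeb_zq[OF q M F] l_def)
  \<comment> \<open>\<open>n \<noteq> 2 \<lambda>\<^sup>2\<close> says precisely that \<open>\<gamma>\<close> moves \<open>z\<^sub>q\<close>\<close>
  have "w \<noteq> z"
  proof
    assume "w = z"
    then have "Rval q {M, mneg M} = 2 * (lam q)^2" by (simp add: Rval_def w_def z_def cosh_rho_def)
    with n show False by simp
  qed
  have "theta q {M, mneg M} = Arg (geo_tangent z w)" by (simp add: theta_def z_def w_def)
  also have "\<dots> = Arg (Complex (2 * Im z * (Re w - Re z)) ((Re w - Re z)^2 + (Im w)^2 - (Im z)^2))"
    by (rule Arg_geo_tangent) (use \<open>w \<noteq> z\<close> l C in \<open>simp_all add: z w\<close>)
  also have "Complex (2 * Im z * (Re w - Re z)) ((Re w - Re z)^2 + (Im w)^2 - (Im z)^2)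
      = of_real (1/C) * Complex x y"
    unfolding z w xy n_eq A N[symmetric] using C by (simp add: complex_eq_iff field_simps power2_eq_square)
  also have "Arg (of_real (1/C) * Complex x y) = Arg (Complex x y)"
    by (rule Arg_times_of_real) (use C in simp)
  finally show ?thesis .
qed

section \<open>Forms of value n and the lattice points\<close>

definition Rforms :: "nat \<Rightarrow> real \<Rightarrow> (int\<times>int\<times>int) set" where
  "Rforms q n = {(A,B,C). 4*A*C - B^2 = int q \<and> 0 < A \<and> form_Rval q (A,B,C) = n}"

lemma form_Rval_gt:
  assumes q: "q \<in> qs" and d: "4*A*C - B^2 = int q" and A: "0 < A"
  shows "0 < C" "\<bar>B\<bar> < A + C" "real_of_int (A + C) / 2 < form_Rval q (A,B,C)"
proof -
  have "B^2 < 4*A*C" using d qs_ge_3[OF q] by linarith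
  then have "0 < 4*A*C" using zero_le_power2[of B] by linarith
  then show C: "0 < C" using A by (simp add: zero_less_mult_iff)
  have "4*A*C \<le> (A + C)^2" using zero_le_power2[of "A - C"] by (simp add: power2_eq_square algebra_simps)
  with \<open>B^2 < 4*A*C\<close> have "\<bar>B\<bar>^2 < (A + C)^2" by simp
  then show B: "\<bar>B\<bar> < A + C" by (rule power2_less_imp_less) (use A C in simp)
  have "real_of_int C \<le> of_int (Nq q) * C" using Nq_pos[OF q] C by simp
  moreover have "of_int (tq q) * real_of_int B \<le> of_int \<bar>B\<bar>" using tq_cases[of q] by auto
  ultimately show "real_of_int (A + C) / 2 < form_Rval q (A,B,C)" using B by (simp add: form_Rval_def)
qed

lemma zq_form_in_Rforms:
  assumes q: "q \<in> qs" and M: "M \<in> SL2Z"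
  shows "zq_form q M \<in> Rforms q n \<longleftrightarrow> Rval q {M, mneg M} = n"
proof -
  obtain A B C where F: "zq_form q M = (A,B,C)" by (cases "zq_form q M")
  have "4*A*C - B^2 = int q" using disc_zq_form[OF q M] F by simp
  then show ?thesis using zq_form_pos[OF q M F] Rval_zq_form[OF q M] F by (auto simp: Rforms_def)
qed

lemma Nset_Rforms:
  assumes q: "q \<in> qs" and n: "n \<in> Nset q"
  obtains F where "F \<in> Rforms q n"
proof -
  obtain M where "M \<in> SL2Z" "Rval q {M, mneg M} = n" using n by (auto simp: Nset_def PSL2Z_def)
  then show thesis using that zq_form_in_Rforms[OF q] by blast
qed

lemma lattice_circle_identity:
  fixes A B C t N l n :: real
  assumes "(t/2)^2 + l^2 = N" and "n = A - t*B/2 + N*C"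
  shows "(l*(B - t*C))^2 + (n - 2*l^2*C)^2 - (n^2 - 4*l^4) = l^2 * (4*l^2 - (4*A*C - B^2))"
  unfolding assms(2) assms(1)[symmetric] by (simp add: algebra_simps power2_eq_square power4_eq_xxxx)

lemma lattice_point_in_Lset:
  assumes q: "q \<in> qs" and F: "F \<in> Rforms q n"
  shows "lattice_point q n F \<in> Lset q n"
proof -
  obtain A B C where F_eq: "F = (A,B,C)" and d: "4*A*C - B^2 = int q" and nv: "form_Rval q (A,B,C) = n"
    using F by (auto simp: Rforms_def)
  define t N l where "t = real_of_int (tq q)" and "N = real_of_int (Nq q)" and "l = lam q"
  have N: "(t/2)^2 + l^2 = N" using zq_norm_sq[OF q] by (simp add: t_def l_def N_def)
  have l: "l > 0" using lam_pos[OF q] by (simp add: l_def)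
  have "real_of_int (4*A*C - B^2) = 4*l^2" using d by (simp add: l_def lam_sq)
  moreover have "n = A - t*B/2 + N*C" using nv by (simp add: form_Rval_def t_def N_def)
  ultimately have "(l*(B - t*C))^2 + (n - 2*l^2*C)^2 = n^2 - 4*l^4"
    using lattice_circle_identity[OF N, of n A B C] by simp
  moreover have "(n - 2*l^2*C - n) / (2*l^2) = of_int (- C)" and "l * (B - t*C) / l = of_int (B - tq q * C)"
    using l by (simp_all add: t_def)
  ultimately show ?thesis by (simp add: F_eq Lset_def lattice_point_def t_def l_def)
qed

lemma inj_on_lattice_point:
  assumes q: "q \<in> qs"
  shows "inj_on (lattice_point q n) (Rforms q n)"
proof (rule inj_onI)
  fix F F' assume F: "F \<in> Rforms q n" and F': "F' \<in> Rforms q n"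
    and eq: "lattice_point q n F = lattice_point q n F'"
  obtain A B C A' B' C' where FF: "F = (A,B,C)" "F' = (A',B',C')" by (cases F; cases F')
  have "lam q > 0" using lam_pos[OF q] .
  then have "C = C'" "B = B'" using eq by (auto simp: FF lattice_point_def)
  moreover have "form_Rval q (A,B,C) = form_Rval q (A',B',C')" using F F' by (simp add: FF Rforms_def)
  ultimately show "F = F'" by (simp add: FF form_Rval_def)
qed

lemma disc_parity:
  assumes q: "q \<in> qs" and "2*A*C - B^2 = int q" and "4*A'*C' - B'^2 = int q"
  shows "even (tq q * (B - B'))"
proof (cases "tq q = 0")
  case False
  then have "odd (int q)" using tq_parity[OF q] tq_cases[of q] by presburger
  then have "odd (2*A*C - B^2)" "odd (4*A'*C' - B'^2)" using assms(2,3) by simp_all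
  then show ?thesis by simp
qed simp

lemma Lset_coordinates:
  assumes q: "q \<in> qs" and p: "p \<in> Lset q n"
  obtains B C :: int where "p = (lam q * (of_int B - of_int (tq q) * of_int C), n - 2 * (lam q)^2 * of_int C)"
proof -
  obtain x y where p_eq: "p = (x,y)" and "(y - n) / (2*(lam q)^2) \<in> \<int>" "x / lam q \<in> \<int>"
    using p by (auto simp: Lset_def)
  then obtain k j where k: "(y - n) / (2*(lam q)^2) = of_int k" and j: "x / lam q = of_int j"
    by (metis Ints_cases)
  show thesis
    by (rule that[of "j - tq q * k" "-k"]) (use k j lam_pos[OF q] in \<open>simp add: p_eq field_simps\<close>)
qed

lemma Lset_subset_lattice_points:
  assumes q: "q \<in> qs" and n: "n \<in> Nset q"
  shows "Lset q n \<subseteq> lattice_point q n ` Rforms q n"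
proof
  fix p assume p: "p \<in> Lset q n"
  obtain F0 where "F0 \<in> Rforms q n" by (rule Nset_Rforms[OF q n])
  then obtain A0 B0 C0 where d0: "4*A0*C0 - B0^2 = int q" and "0 < A0"
    and n0: "form_Rval q (A0,B0,C0) = n"
    by (auto simp: Rforms_def)
  obtain B C where p_eq: "p = (lam q * (of_int B - of_int (tq q) * of_int C), n - 2 * (lam q)^2 * of_int C)"
    using Lset_coordinates[OF q p] .
  define t N l where "t = real_of_int (tq q)" and "N = real_of_int (Nq q)" and "l = lam q"
  have N: "(t/2)^2 + l^2 = N" using zq_norm_sq[OF q] by (simp add: t_def l_def N_def)
  have l: "l > 0" using lam_pos[OF q] by (simp add: l_def)
  have circ: "(l * (B - t*C))^2 + (n - 2*l^2*C)^2 = n^2 - 4*l^4"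
    using p by (simp add: Lset_def p_eq t_def l_def)
  \<comment> \<open>only \<open>2 A\<close> is visibly integral: it is fixed by \<open>n\<close>, \<open>B\<close> and \<open>C\<close>\<close>
  define A2 where "A2 = 2*A0 - tq q*B0 + 2*Nq q*C0 + tq q*B - 2*Nq q*C"
  have n2: "n = A2/2 - t*B/2 + N*C"
    using n0 by (simp add: A2_def form_Rval_def t_def N_def field_simps)
  have "l^2 * (4*l^2 - (4*(A2/2)*C - B^2)) = 0"
    using lattice_circle_identity[OF N n2] circ by simp
  then have "real_of_int (2*A2*C - B^2) = real q" using qs_ge_3[OF q] by (simp add: l_def lam_sq)
  then have dA2: "2*A2*C - B^2 = int q" by linarith
  have "even A2"
    using disc_parity[OF q dA2 d0] by (simp add: A2_def right_diff_distrib)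
  then obtain A where A: "A2 = 2*A" by blast
  have "0 < l^4" using l by simp
  then have "(n - 2*l^2*C)^2 < n^2" using circ zero_le_power2[of "l * (B - t*C)"] by linarith
  moreover have "0 < n" using form_Rval_gt[OF q d0 \<open>0 < A0\<close>] n0 by simp
  ultimately have "\<bar>n - 2*l^2*C\<bar> < n" using power2_less_imp_less[of "\<bar>n - 2*l^2*C\<bar>" n] by simp
  then have "0 < C * l^2" by (simp add: abs_less_iff)
  then have "0 < C" using l by (simp add: zero_less_mult_iff)
  have d: "4*A*C - B^2 = int q" using dA2 A by simp
  then have "0 < 4*A*C" using qs_ge_3[OF q] zero_le_power2[of B] by linarith
  then have "0 < A" using \<open>0 < C\<close> by (simp add: zero_less_mult_iff)
  moreover have "form_Rval q (A,B,C) = n" using n2 A by (simp add: form_Rval_def t_def N_def)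
  ultimately have "(A,B,C) \<in> Rforms q n" using d by (simp add: Rforms_def)
  moreover have "lattice_point q n (A,B,C) = p" by (simp add: lattice_point_def p_eq)
  ultimately show "p \<in> lattice_point q n ` Rforms q n" by force
qed

definition SL_Gamma_n :: "nat \<Rightarrow> real \<Rightarrow> (int\<times>int\<times>int\<times>int) set" where
  "SL_Gamma_n q n = {M \<in> SL2Z. Rval q {M, mneg M} = n}"

lemma SL_Gamma_n_iff:
  assumes "q \<in> qs"
  shows "M \<in> SL_Gamma_n q n \<longleftrightarrow> M \<in> SL2Z \<and> zq_form q M \<in> Rforms q n"
  using zq_form_in_Rforms[OF assms, of M n] by (auto simp: SL_Gamma_n_def)

lemma Gamma_n_eq_image: "Gamma_n q n = (\<lambda>M. {M, mneg M}) ` SL_Gamma_n q n"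
  by (auto simp: Gamma_n_def PSL2Z_def SL_Gamma_n_def)

lemma finite_SL_Gamma_n:
  assumes q: "q \<in> qs"
  shows "finite (SL_Gamma_n q n)"
proof -
  define K where "K = 8 * \<lceil>n\<rceil>"
  have "SL_Gamma_n q n \<subseteq> {-K..K} \<times> {-K..K} \<times> {-K..K} \<times> {-K..K}"
  proof
    fix M assume M: "M \<in> SL_Gamma_n q n"
    obtain a b c d where M_eq: "M = (a,b,c,d)" by (cases M)
    obtain A B C where F: "zq_form q M = (A,B,C)" by (cases "zq_form q M")
    have "zq_form q M \<in> Rforms q n" using M zq_form_in_Rforms[OF q] by (simp add: SL_Gamma_n_def)
    then have d: "4*A*C - B^2 = int q" and "0 < A" and nv: "form_Rval q (A,B,C) = n"
      by (simp_all add: F Rforms_def)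
    note bounds = form_Rval_gt[OF q d \<open>0 < A\<close>]
    have "real_of_int (A + C) < 2 * n" using bounds(3) nv by simp
    then have "A \<le> 2 * \<lceil>n\<rceil>" "C \<le> 2 * \<lceil>n\<rceil>" using \<open>0 < A\<close> bounds(1) by linarith+
    moreover have "Nq q * a^2 + tq q * a * b + b^2 = A" "Nq q * c^2 + tq q * c * d + d^2 = C"
      using F by (simp_all add: M_eq zq_form_simp)
    ultimately have "\<bar>a\<bar> \<le> K" "\<bar>b\<bar> \<le> K" "\<bar>c\<bar> \<le> K" "\<bar>d\<bar> \<le> K"
      using principal_form_bound[OF q, of a b "2 * \<lceil>n\<rceil>"] principal_form_bound[OF q, of c d "2 * \<lceil>n\<rceil>"]
      unfolding K_def by linarith+
    then show "M \<in> {-K..K} \<times> {-K..K} \<times> {-K..K} \<times> {-K..K}"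
      by (simp add: M_eq abs_le_iff)
  qed
  then show ?thesis by (rule finite_subset) simp
qed

lemma average_Gamma_n_lift:
  fixes h :: "(int\<times>int\<times>int\<times>int) set \<Rightarrow> real"
  assumes q: "q \<in> qs"
  shows "(\<Sum>g\<in>Gamma_n q n. h g) / card (Gamma_n q n)
       = (\<Sum>M\<in>SL_Gamma_n q n. h {M, mneg M}) / card (SL_Gamma_n q n)"
proof (rule average_const_fibres[OF finite_SL_Gamma_n[OF q] Gamma_n_eq_image[symmetric], symmetric])
  fix g assume "g \<in> Gamma_n q n"
  then obtain M0 where M0: "M0 \<in> SL_Gamma_n q n" "g = {M0, mneg M0}"
    by (auto simp: Gamma_n_eq_image)
  then have "mneg M0 \<in> SL_Gamma_n q n" using SL2Z_mneg by (auto simp: SL_Gamma_n_def insert_commute)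
  then have "{M \<in> SL_Gamma_n q n. {M, mneg M} = g} = {M0, mneg M0}"
    using M0 by (auto simp: doubleton_eq_iff)
  moreover have "mneg M0 \<noteq> M0" using M0(1) mneg_neq by (simp add: SL_Gamma_n_def)
  ultimately show "card {M \<in> SL_Gamma_n q n. {M, mneg M} = g} = 2" by simp
qed

definition zq_stabilizer :: "nat \<Rightarrow> (int\<times>int\<times>int\<times>int) set" where
  "zq_stabilizer q = {V \<in> SL2Z. zq_form q V = zq_form q (1,0,0,1)}"

lemma zq_form_fibre:
  assumes M0: "M0 \<in> SL2Z"
  shows "{M \<in> SL2Z. zq_form q M = zq_form q M0} = mat_mul M0 ` zq_stabilizer q"
proof (intro equalityI subsetI)
  fix M assume "M \<in> mat_mul M0 ` zq_stabilizer q"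
  then obtain V where V: "V \<in> SL2Z" "zq_form q V = zq_form q (1,0,0,1)" and M: "M = mat_mul M0 V"
    by (auto simp: zq_stabilizer_def)
  have "zq_form q M = zq_form q (mat_mul M0 (1,0,0,1))" by (simp only: M zq_form_mat_mul V(2))
  then show "M \<in> {M \<in> SL2Z. zq_form q M = zq_form q M0}" using SL2Z_mat_mul[OF M0 V(1)] M by simp
next
  fix M assume "M \<in> {M \<in> SL2Z. zq_form q M = zq_form q M0}"
  then have M: "M \<in> SL2Z" "zq_form q M = zq_form q M0" by auto
  define V where "V = mat_mul (mat_adj M0) M"
  have "zq_form q V = zq_form q (mat_mul (mat_adj M0) M0)" by (simp only: V_def zq_form_mat_mul M(2))
  then have "V \<in> zq_stabilizer q"
    using SL2Z_mat_mul[OF SL2Z_mat_adj[OF M0] M(1)] by (simp add: zq_stabilizer_def V_def mat_mul_adj(2)[OF M0])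
  moreover have "M = mat_mul M0 V"
    by (simp add: V_def mat_mul_assoc[symmetric] mat_mul_adj(1)[OF M0])
  ultimately show "M \<in> mat_mul M0 ` zq_stabilizer q" by blast
qed

lemma card_zq_form_fibre:
  assumes M0: "M0 \<in> SL2Z"
  shows "card {M \<in> SL2Z. zq_form q M = zq_form q M0} = card (zq_stabilizer q)"
proof -
  have "inj (mat_mul M0)"
  proof (rule injI)
    fix V V' assume "mat_mul M0 V = mat_mul M0 V'"
    then have "mat_mul (mat_mul (mat_adj M0) M0) V = mat_mul (mat_mul (mat_adj M0) M0) V'"
      by (simp add: mat_mul_assoc)
    then show "V = V'" by (simp add: mat_mul_adj(2)[OF M0])
  qed
  then show ?thesis unfolding zq_form_fibre[OF M0] by (simp add: card_image inj_on_subset)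
qed

lemma lattice_point_zq_form_image:
  assumes q: "q \<in> qs" and n: "n \<in> Nset q"
  shows "(\<lambda>M. lattice_point q n (zq_form q M)) ` SL_Gamma_n q n = Lset q n"
proof
  show "(\<lambda>M. lattice_point q n (zq_form q M)) ` SL_Gamma_n q n \<subseteq> Lset q n"
    using lattice_point_in_Lset[OF q] SL_Gamma_n_iff[OF q] by blast
next
  show "Lset q n \<subseteq> (\<lambda>M. lattice_point q n (zq_form q M)) ` SL_Gamma_n q n"
  proof
    fix p assume "p \<in> Lset q n"
    then obtain A B C where F: "(A,B,C) \<in> Rforms q n" "lattice_point q n (A,B,C) = p"
      using Lset_subset_lattice_points[OF q n] by auto
    have "4*A*C - B^2 = int q" "0 < A" using F(1) by (simp_all add: Rforms_def)
    then obtain M where "M \<in> SL2Z" "zq_form q M = (A,B,C)" using zq_form_surj[OF q] by blast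
    then show "p \<in> (\<lambda>M. lattice_point q n (zq_form q M)) ` SL_Gamma_n q n"
      using F SL_Gamma_n_iff[OF q] by (metis image_eqI)
  qed
qed

lemma card_lattice_point_fibre:
  assumes q: "q \<in> qs" and M0: "M0 \<in> SL_Gamma_n q n"
  shows "card {M \<in> SL_Gamma_n q n. lattice_point q n (zq_form q M) = lattice_point q n (zq_form q M0)}
       = card (zq_stabilizer q)"
proof -
  have "{M \<in> SL_Gamma_n q n. lattice_point q n (zq_form q M) = lattice_point q n (zq_form q M0)}
      = {M \<in> SL2Z. zq_form q M = zq_form q M0}"
    using M0 inj_on_lattice_point[OF q] by (auto simp: SL_Gamma_n_iff[OF q] inj_on_def)
  then show ?thesis using card_zq_form_fibre M0 by (simp add: SL_Gamma_n_def)
qed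

lemma average_Gamma_n_eq_average_Lset:
  fixes h :: "real \<Rightarrow> real"
  assumes q: "q \<in> qs" and n: "n \<in> Nset q" and moved: "n \<noteq> 2 * (lam q)^2"
  shows "(\<Sum>g\<in>Gamma_n q n. h (theta q g)) / card (Gamma_n q n)
       = (\<Sum>p\<in>Lset q n. h (Arg (Complex (fst p) (snd p)))) / card (Lset q n)"
proof -
  define \<phi> where "\<phi> = (\<lambda>M. lattice_point q n (zq_form q M))"
  have "theta q {M, mneg M} = Arg (Complex (fst (\<phi> M)) (snd (\<phi> M)))" if "M \<in> SL_Gamma_n q n" for M
    using theta_zq_form[OF q _ _ moved, of M "fst (\<phi> M)" "snd (\<phi> M)"] that
    by (simp add: SL_Gamma_n_def \<phi>_def)
  then have "(\<Sum>g\<in>Gamma_n q n. h (theta q g)) / card (Gamma_n q n)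
      = (\<Sum>M\<in>SL_Gamma_n q n. h (Arg (Complex (fst (\<phi> M)) (snd (\<phi> M))))) / card (SL_Gamma_n q n)"
    by (simp add: average_Gamma_n_lift[OF q] cong: sum.cong)
  also have "\<dots> = (\<Sum>p\<in>Lset q n. h (Arg (Complex (fst p) (snd p)))) / card (Lset q n)"
  proof (rule average_const_fibres[OF finite_SL_Gamma_n[OF q]])
    show "\<phi> ` SL_Gamma_n q n = Lset q n" unfolding \<phi>_def by (rule lattice_point_zq_form_image[OF q n])
    fix p assume "p \<in> Lset q n"
    then have "p \<in> \<phi> ` SL_Gamma_n q n" using lattice_point_zq_form_image[OF q n] by (simp add: \<phi>_def)
    then obtain M0 where "M0 \<in> SL_Gamma_n q n" "p = \<phi> M0" by blast
    then show "card {M \<in> SL_Gamma_n q n. \<phi> M = p} = card (zq_stabilizer q)"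
      using card_lattice_point_fibre[OF q] by (simp add: \<phi>_def)
  qed
  finally show ?thesis .
qed

theorem corollary2p7:
  fixes q :: nat and n :: real
  assumes "q \<in> qs" and "n \<in> Nset q" and "n \<noteq> 2 * (lam q)^2"
  shows "(SUP (a,l)\<in>arcs.
            \<bar>(\<Sum>g\<in>Gamma_n q n. if in_arc a l (theta q g) then 1 else 0) / real (card (Gamma_n q n))
              - l / (2 * pi)\<bar>)
       = (SUP (a,l)\<in>arcs.
            \<bar>(\<Sum>p\<in>Lset q n. if in_arc a l (Arg (Complex (fst p) (snd p))) then 1 else 0)
                / real (card (Lset q n))
              - l / (2 * pi)\<bar>)"
proof -
  have "(\<Sum>g\<in>Gamma_n q n. if in_arc a l (theta q g) then 1 else 0) / real (card (Gamma_n q n))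
      = (\<Sum>p\<in>Lset q n. if in_arc a l (Arg (Complex (fst p) (snd p))) then 1 else 0)
          / real (card (Lset q n))" for a l
    using average_Gamma_n_eq_average_Lset[OF assms, of "\<lambda>\<theta>. if in_arc a l \<theta> then 1 else 0"] by simp
  then show ?thesis by simp
qed

end
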